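(* Let $m\ge 2$ and let $\mathbb N$ be the directed cycle $1\to2\to\cdots\to m\to 1$, where for each $i\in\{1,\dots,m\}$ the arc from $i-1$ to $i$ (with the convention that vertex $0$ is vertex $m$) carries the matrix $C_i$ with $n$ columns, and $\mathcal K_i=\ker C_i$. Then $\bar{\mathbb N}$ is well-configured, i.e. for all $x_1,\dots,x_m\in\mathbb R^n$ (with $x_0:=x_m$) the relations $C_ix_i=C_ix_{i-1}$, $i=1,\dots,m$, imply $x_1=\cdots=x_m$, if and only if $\{\mathcal K_1,\dots,\mathcal K_m\}$ is an independent family.
   Context: A finite indexed family of subspaces $\{\mathcal S_1,\dots,\mathcal S_p\}$ of $\mathbb R^n$ is independent if $\mathcal S_i\cap\sum_{j\ne i}\mathcal S_j=0$ for every $i$. *)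

theory Defs
  imports "HOL-Analysis.Analysis"
begin

text \<open>A matrix with r rows and n columns is given by its entries A k j
  (row k < r, column j, columns indexed by the finite type 'n); its product
  with x in R^n is the vector in R^r, represented as a function on rows
  (zero outside the row range).\<close>
definition mat_mult_vec :: "nat \<Rightarrow> (nat \<Rightarrow> 'n::finite \<Rightarrow> real) \<Rightarrow> real^'n \<Rightarrow> (nat \<Rightarrow> real)" where
  "mat_mult_vec r A x = (\<lambda>k. if k < r then (\<Sum>j\<in>UNIV. A k j * x $ j) else 0)"

definition mat_kernel :: "nat \<Rightarrow> (nat \<Rightarrow> 'n::finite \<Rightarrow> real) \<Rightarrow> (real^'n) set" where
  "mat_kernel r A = {x. mat_mult_vec r A x = (\<lambda>k. 0)}"

definition subspace_sum :: "('i \<Rightarrow> 'a::comm_monoid_add set) \<Rightarrow> 'i set \<Rightarrow> 'a set" where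
  "subspace_sum S J = {(\<Sum>j\<in>J. v j) | v. \<forall>j\<in>J. v j \<in> S j}"

definition independent_family :: "('i \<Rightarrow> 'a::comm_monoid_add set) \<Rightarrow> 'i set \<Rightarrow> bool" where
  "independent_family S I \<longleftrightarrow> (\<forall>i\<in>I. S i \<inter> subspace_sum S (I - {i}) = {0})"

definition cyc_pred :: "nat \<Rightarrow> nat \<Rightarrow> nat" where
  "cyc_pred m i = (if i = 1 then m else i - 1)"

definition well_configured_cycle ::
  "nat \<Rightarrow> (nat \<Rightarrow> nat) \<Rightarrow> (nat \<Rightarrow> nat \<Rightarrow> 'n::finite \<Rightarrow> real) \<Rightarrow> bool" where
  "well_configured_cycle m r C \<longleftrightarrow>
     (\<forall>x :: nat \<Rightarrow> real^'n.
        (\<forall>i\<in>{1..m}. mat_mult_vec (r i) (C i) (x i) = mat_mult_vec (r i) (C i) (x (cyc_pred m i)))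
        \<longrightarrow> (\<forall>i\<in>{1..m}. \<forall>j\<in>{1..m}. x i = x j))"

end

theory Submission
  imports Defs
begin

text \<open>Write \<open>d\<^sub>k = x\<^sub>k - x\<^sub>k\<^sub>-\<^sub>1\<close> for the differences of \<open>x\<close> along the arcs of the cycle.
  The hypotheses \<open>C\<^sub>k x\<^sub>k = C\<^sub>k x\<^sub>k\<^sub>-\<^sub>1\<close> say \<open>d\<^sub>k \<in> \<K>\<^sub>k\<close>, and \<open>x\<close> is constant iff all
  \<open>d\<^sub>k\<close> vanish. The difference families of the cycle are exactly the families with
  zero sum (telescoping one way, partial sums the other), so well-configuredness says
  that every zero-sum family \<open>d\<^sub>k \<in> \<K>\<^sub>k\<close> is trivial, which is independence of the
  subspaces \<open>\<K>\<^sub>k\<close>.\<close>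

lemma mat_kernel_eq: "mat_kernel r A = {x. \<forall>k<r. (\<Sum>j\<in>UNIV. A k j * x $ j) = 0}"
  by (auto simp: mat_kernel_def mat_mult_vec_def fun_eq_iff)

lemma subspace_mat_kernel: "subspace (mat_kernel r A)"
  unfolding subspace_def mat_kernel_eq
  by (auto simp: algebra_simps sum.distrib sum_distrib_left[symmetric])

lemma diff_in_mat_kernel_iff:
  "x - y \<in> mat_kernel r A \<longleftrightarrow> mat_mult_vec r A x = mat_mult_vec r A y"
  by (auto simp: mat_kernel_def mat_mult_vec_def fun_eq_iff algebra_simps sum_subtractf)

lemma independent_family_iff_sum_eq_0:
  fixes S :: "'i \<Rightarrow> 'a::real_vector set"
  assumes "finite I" and subspaces: "\<And>i. i \<in> I \<Longrightarrow> subspace (S i)"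
  shows "independent_family S I \<longleftrightarrow>
         (\<forall>v. (\<forall>i\<in>I. v i \<in> S i) \<and> (\<Sum>i\<in>I. v i) = 0 \<longrightarrow> (\<forall>i\<in>I. v i = 0))"
proof
  assume indep: "independent_family S I"
  show "\<forall>v. (\<forall>i\<in>I. v i \<in> S i) \<and> (\<Sum>i\<in>I. v i) = 0 \<longrightarrow> (\<forall>i\<in>I. v i = 0)"
  proof (intro allI impI ballI)
    fix v i
    assume v: "(\<forall>i\<in>I. v i \<in> S i) \<and> (\<Sum>i\<in>I. v i) = 0" and i: "i \<in> I"
    have "- v i = (\<Sum>j\<in>I - {i}. v j)"
      using v i \<open>finite I\<close> by (simp add: sum.remove neg_eq_iff_add_eq_0)
    then have "- v i \<in> subspace_sum S (I - {i})"
      using v by (auto simp: subspace_sum_def)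
    moreover have "- v i \<in> S i"
      using v i subspaces by (simp add: subspace_neg)
    ultimately have "- v i \<in> {0}"
      using indep i unfolding independent_family_def by blast
    then show "v i = 0" by simp
  qed
next
  assume trivial: "\<forall>v. (\<forall>i\<in>I. v i \<in> S i) \<and> (\<Sum>i\<in>I. v i) = 0 \<longrightarrow> (\<forall>i\<in>I. v i = 0)"
  show "independent_family S I"
    unfolding independent_family_def
  proof (intro ballI equalityI subsetI)
    fix i u
    assume i: "i \<in> I"
    show "u \<in> S i \<inter> subspace_sum S (I - {i})" if "u \<in> {0}"
      using that i subspaces
      by (auto simp: subspace_sum_def subspace_0 intro!: exI[of _ "\<lambda>_. 0"])
    assume "u \<in> S i \<inter> subspace_sum S (I - {i})"
    then obtain w where u: "u \<in> S i" and w: "\<forall>j\<in>I - {i}. w j \<in> S j"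
      and u_eq: "u = (\<Sum>j\<in>I - {i}. w j)"
      by (auto simp: subspace_sum_def)
    define v where "v = w(i := - u)"
    have "(\<Sum>j\<in>I. v j) = - u + (\<Sum>j\<in>I - {i}. w j)"
      using i \<open>finite I\<close> by (simp add: v_def sum.remove)
    moreover have "\<forall>j\<in>I. v j \<in> S j"
      using u w subspaces by (auto simp: v_def subspace_neg)
    ultimately have "v i = 0"
      using trivial i u_eq by auto
    then show "u \<in> {0}" by (simp add: v_def)
  qed
qed

lemma cyc_pred_Suc [simp]: "k \<noteq> 0 \<Longrightarrow> cyc_pred m (Suc k) = k"
  by (simp add: cyc_pred_def)

lemma cyc_pred_one [simp]: "cyc_pred m (Suc 0) = m"
  by (simp add: cyc_pred_def)

lemma sum_cycle_differences:
  fixes x :: "nat \<Rightarrow> 'a::ab_group_add"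
  shows "(\<Sum>k\<in>{1..m}. x k - x (cyc_pred m k)) = 0"
proof (cases m)
  case (Suc n)
  have "(\<Sum>k\<in>{1..Suc n}. x (cyc_pred m k)) = x m + (\<Sum>k\<in>{Suc 1..Suc n}. x (cyc_pred m k))"
    by (simp add: sum.atLeast_Suc_atMost)
  also have "(\<Sum>k\<in>{Suc 1..Suc n}. x (cyc_pred m k)) = (\<Sum>k\<in>{1..n}. x k)"
    by (simp only: sum.shift_bounds_cl_Suc_ivl) simp
  also have "x m + (\<Sum>k\<in>{1..n}. x k) = (\<Sum>k\<in>{1..m}. x k)"
    using Suc by (simp add: sum.cl_ivl_Suc add.commute)
  finally show ?thesis
    using Suc by (simp add: sum_subtractf)
qed simp

lemma cycle_differences_partial_sums:
  fixes d :: "nat \<Rightarrow> 'a::ab_group_add"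
  assumes "(\<Sum>k\<in>{1..m}. d k) = 0" and "k \<in> {1..m}"
  shows "(\<Sum>j\<in>{1..k}. d j) - (\<Sum>j\<in>{1..cyc_pred m k}. d j) = d k"
proof (cases "k = 1")
  case False
  then obtain k' where "k = Suc k'" "k' \<noteq> 0"
    using assms(2) by (cases k) auto
  then show ?thesis by simp
qed (use assms in simp)

lemma cycle_constant_iff:
  "(\<forall>k\<in>{1..m}. x k = x (cyc_pred m k)) \<longleftrightarrow> (\<forall>i\<in>{1..m}. \<forall>j\<in>{1..m}. x i = x j)"
proof
  assume steps: "\<forall>k\<in>{1..m}. x k = x (cyc_pred m k)"
  have "x k = x 1" if "k \<in> {1..m}" for k
    using that
  proof (induction k)
    case (Suc k)
    then show ?case
      using steps by (cases "k = 0") auto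
  qed simp
  then show "\<forall>i\<in>{1..m}. \<forall>j\<in>{1..m}. x i = x j" by metis
next
  assume "\<forall>i\<in>{1..m}. \<forall>j\<in>{1..m}. x i = x j"
  moreover have "cyc_pred m k \<in> {1..m}" if "k \<in> {1..m}" for k
    using that by (auto simp: cyc_pred_def)
  ultimately show "\<forall>k\<in>{1..m}. x k = x (cyc_pred m k)" by blast
qed

lemma all_cycle_differences_iff_all_zero_sum:
  fixes P :: "(nat \<Rightarrow> 'a::ab_group_add) \<Rightarrow> bool"
  assumes P_local: "\<And>d d'. (\<And>k. k \<in> {1..m} \<Longrightarrow> d k = d' k) \<Longrightarrow> P d \<longleftrightarrow> P d'"
  shows "(\<forall>(x :: nat \<Rightarrow> 'a). P (\<lambda>k. x k - x (cyc_pred m k))) \<longleftrightarrow>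
         (\<forall>d. (\<Sum>k\<in>{1..m}. d k) = 0 \<longrightarrow> P d)"
proof
  assume differences: "\<forall>(x :: nat \<Rightarrow> 'a). P (\<lambda>k. x k - x (cyc_pred m k))"
  show "\<forall>d. (\<Sum>k\<in>{1..m}. d k) = 0 \<longrightarrow> P d"
  proof (intro allI impI)
    fix d :: "nat \<Rightarrow> 'a"
    assume zero_sum: "(\<Sum>k\<in>{1..m}. d k) = 0"
    define x where "x k = (\<Sum>j\<in>{1..k}. d j)" for k
    have x_differences: "x k - x (cyc_pred m k) = d k" if "k \<in> {1..m}" for k
      unfolding x_def using zero_sum that by (rule cycle_differences_partial_sums)
    have "P (\<lambda>k. x k - x (cyc_pred m k)) \<longleftrightarrow> P d"
      by (rule P_local) (rule x_differences)
    with differences show "P d" by blast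
  qed
next
  assume zero_sums: "\<forall>d. (\<Sum>k\<in>{1..m}. d k) = 0 \<longrightarrow> P d"
  show "\<forall>(x :: nat \<Rightarrow> 'a). P (\<lambda>k. x k - x (cyc_pred m k))"
    using zero_sums[rule_format, OF sum_cycle_differences] by (rule allI)
qed

theorem lemma2:
  fixes m :: nat and r :: "nat \<Rightarrow> nat" and C :: "nat \<Rightarrow> nat \<Rightarrow> 'n::finite \<Rightarrow> real"
  assumes "m \<ge> 2"
  shows "well_configured_cycle m r C \<longleftrightarrow>
         independent_family (\<lambda>i. mat_kernel (r i) (C i)) {1..m}"
proof -
  let ?K = "\<lambda>i. mat_kernel (r i) (C i)"
  let ?trivial = "\<lambda>d. (\<forall>k\<in>{1..m}. d k \<in> ?K k) \<longrightarrow> (\<forall>k\<in>{1..m}. d k = 0)"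
  have "well_configured_cycle m r C \<longleftrightarrow> (\<forall>x. ?trivial (\<lambda>k. x k - x (cyc_pred m k)))"
    unfolding well_configured_cycle_def cycle_constant_iff[symmetric]
    by (simp add: diff_in_mat_kernel_iff)
  also have "\<dots> \<longleftrightarrow> (\<forall>d. (\<Sum>k\<in>{1..m}. d k) = 0 \<longrightarrow> ?trivial d)"
    by (rule all_cycle_differences_iff_all_zero_sum) simp
  also have "\<dots> \<longleftrightarrow> independent_family ?K {1..m}"
    by (auto simp: independent_family_iff_sum_eq_0 subspace_mat_kernel)
  finally show ?thesis .
qed

end
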